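(* Let $n$ and $r$ be positive integers with $\frac{25}{9}r-1\le n<\frac{14}{5}r-1$. Then $\rho_2(K(n,r))=4$.
   Context: For integers $n\ge 2r$, the Kneser graph $K(n,r)$ has as vertices the $r$-element subsets of $[n]=\{1,\dots,n\}$, two vertices being adjacent iff they are disjoint. A $2$-packing of a graph $G$ is a set of vertices pairwise at distance at least $3$ in $G$; $\rho_2(G)$ is the maximum cardinality of a $2$-packing. *)

theory Defs
  imports Complex_Main
begin

definition kneser_vertices :: "nat \<Rightarrow> nat \<Rightarrow> nat set set" where
  "kneser_vertices n r = {A. A \<subseteq> {1..n} \<and> card A = r}"

definition kneser_adj :: "nat set \<Rightarrow> nat set \<Rightarrow> bool" where
  "kneser_adj A B \<longleftrightarrow> A \<inter> B = {}"

text \<open>A walk of length k from u to v in the graph (V, E): list of k+1 vertices.\<close>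
definition is_walk :: "'a set \<Rightarrow> ('a \<Rightarrow> 'a \<Rightarrow> bool) \<Rightarrow> 'a list \<Rightarrow> bool" where
  "is_walk V E ws \<longleftrightarrow> ws \<noteq> [] \<and> set ws \<subseteq> V \<and>
     (\<forall>i. Suc i < length ws \<longrightarrow> E (ws ! i) (ws ! Suc i))"

definition dist_ge :: "'a set \<Rightarrow> ('a \<Rightarrow> 'a \<Rightarrow> bool) \<Rightarrow> nat \<Rightarrow> 'a \<Rightarrow> 'a \<Rightarrow> bool" where
  "dist_ge V E d u v \<longleftrightarrow>
     \<not> (\<exists>ws. is_walk V E ws \<and> hd ws = u \<and> last ws = v \<and> length ws - 1 < d)"

definition is_2packing :: "'a set \<Rightarrow> ('a \<Rightarrow> 'a \<Rightarrow> bool) \<Rightarrow> 'a set \<Rightarrow> bool" where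
  "is_2packing V E P \<longleftrightarrow> P \<subseteq> V \<and>
     (\<forall>u\<in>P. \<forall>v\<in>P. u \<noteq> v \<longrightarrow> dist_ge V E 3 u v)"

definition rho2 :: "'a set \<Rightarrow> ('a \<Rightarrow> 'a \<Rightarrow> bool) \<Rightarrow> nat" where
  "rho2 V E = Max (card ` {P. is_2packing V E P})"

end

theory Submission
  imports Defs
begin

text \<open>Two distinct vertices of \<open>K(n,r)\<close> are at distance at least 3 iff they are not adjacent
  and have no common neighbour, i.e. iff they meet and the complement of their union is too small
  to contain an \<open>r\<close>-set; in terms of \<open>c = |u \<inter> v|\<close> this reads \<open>1 \<le> c \<le> 3r - n - 1\<close>.
  For five such sets, counting their union by Bonferroni gives \<open>5r \<le> n + 10(3r - n - 1)\<close>,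
  contradicting \<open>25r \<le> 9n + 9\<close>. Conversely, four \<open>r\<close>-sets meeting pairwise in exactly
  \<open>a = 3r - n - 1\<close> points are obtained from six blocks of size \<open>a\<close>, one for each pair, and four
  private blocks of size \<open>r - 3a\<close>; they fit into \<open>[n]\<close> because \<open>5n + 5 < 14r\<close>.\<close>

lemma dist_ge_3_iff:
  assumes "u \<in> V" "v \<in> V"
  shows "dist_ge V E 3 u v \<longleftrightarrow> u \<noteq> v \<and> \<not> E u v \<and> \<not> (\<exists>w\<in>V. E u w \<and> E w v)"
proof
  assume dist: "dist_ge V E 3 u v"
  have no_walk: "\<not> is_walk V E ws" if "hd ws = u" "last ws = v" "length ws \<le> 3" for ws
    using dist that unfolding dist_ge_def by force
  show "u \<noteq> v \<and> \<not> E u v \<and> \<not> (\<exists>w\<in>V. E u w \<and> E w v)"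
  proof (intro conjI notI)
    show False if "u = v" using no_walk[of "[u]"] assms that by (auto simp: is_walk_def)
    show False if "E u v" using no_walk[of "[u, v]"] assms that by (auto simp: is_walk_def)
    show False if "\<exists>w\<in>V. E u w \<and> E w v"
    proof -
      from that obtain w where "w \<in> V" "E u w" "E w v" by blast
      then show False
        using no_walk[of "[u, w, v]"] assms
        by (auto simp: is_walk_def less_Suc_eq nth_Cons split: nat.splits)
    qed
  qed
next
  assume "u \<noteq> v \<and> \<not> E u v \<and> \<not> (\<exists>w\<in>V. E u w \<and> E w v)"
  then have far: "u \<noteq> v" "\<not> E u v" "\<And>w. w \<in> V \<Longrightarrow> \<not> (E u w \<and> E w v)" by blast+
  show "dist_ge V E 3 u v"
    unfolding dist_ge_def
  proof
    assume "\<exists>ws. is_walk V E ws \<and> hd ws = u \<and> last ws = v \<and> length ws - 1 < 3"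
    then obtain ws where ws: "is_walk V E ws" "hd ws = u" "last ws = v" "length ws \<le> 3"
      by auto
    have "ws \<noteq> []" "set ws \<subseteq> V" and step: "\<And>i. Suc i < length ws \<Longrightarrow> E (ws ! i) (ws ! Suc i)"
      using ws(1) unfolding is_walk_def by auto
    from \<open>ws \<noteq> []\<close> ws(4)
    consider x where "ws = [x]" | x y where "ws = [x, y]" | x y z where "ws = [x, y, z]"
      by (cases ws; cases "tl ws"; cases "tl (tl ws)") auto
    then show False
    proof cases
      case 1 then show False using ws far(1) by simp
    next
      case 2 then show False using ws step[of 0] far(2) by simp
    next
      case (3 x y z) then show False
        using ws step[of 0] step[of 1] far(3)[of y] \<open>set ws \<subseteq> V\<close> by simp
    qed
  qed
qed

lemma is_2packing_subset: "is_2packing V E P \<Longrightarrow> Q \<subseteq> P \<Longrightarrow> is_2packing V E Q"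
  unfolding is_2packing_def by blast

lemma rho2_eqI:
  assumes "finite V" "is_2packing V E P" "\<And>Q. is_2packing V E Q \<Longrightarrow> card Q \<le> card P"
  shows "rho2 V E = card P"
  unfolding rho2_def
proof (rule Max_eqI)
  show "finite (card ` {P. is_2packing V E P})"
    using \<open>finite V\<close> by (auto simp: is_2packing_def intro: finite_subset[of _ "Pow V"])
qed (use assms in auto)

lemma sum_card_le_card_Union_plus_pairs:
  assumes "finite F" "\<And>A. A \<in> F \<Longrightarrow> finite A"
    and "\<And>A B. A \<in> F \<Longrightarrow> B \<in> F \<Longrightarrow> A \<noteq> B \<Longrightarrow> card (A \<inter> B) \<le> s"
  shows "(\<Sum>A\<in>F. card A) \<le> card (\<Union>F) + s * (card F choose 2)"
  using assms
proof (induction F rule: finite_induct)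
  case empty
  then show ?case by simp
next
  case (insert A F)
  have "card (A \<inter> \<Union>F) = card (\<Union>B\<in>F. A \<inter> B)"
    by (rule arg_cong[where f = card]) blast
  also have "\<dots> \<le> (\<Sum>B\<in>F. card (A \<inter> B))"
    by (rule card_UN_le[OF insert.hyps(1)])
  also have "\<dots> \<le> (\<Sum>B\<in>F. s)"
    by (rule sum_mono) (use insert in blast)
  finally have meet: "card (A \<inter> \<Union>F) \<le> s * card F"
    by (simp add: mult.commute)
  have "card A + card (\<Union>F) = card (A \<union> \<Union>F) + card (A \<inter> \<Union>F)"
    by (rule card_Un_Int) (use insert in auto)
  moreover have "card (insert A F) choose 2 = (card F choose 2) + card F"
    using insert.hyps by (simp add: numeral_2_eq_2)
  moreover have "(\<Sum>B\<in>F. card B) \<le> card (\<Union>F) + s * (card F choose 2)"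
    using insert by blast
  ultimately show ?case
    using meet insert.hyps by (simp add: algebra_simps)
qed

lemma card_Un_greaterThanAtMost:
  fixes c d :: nat
  assumes "finite X" "X \<subseteq> {..c}"
  shows "card (X \<union> {c<..d}) = card X + (d - c)"
  using assms by (subst card_Un_disjoint) auto

lemma finite_kneser_vertices: "finite (kneser_vertices n r)"
  by (rule finite_subset[of _ "Pow {1..n}"]) (auto simp: kneser_vertices_def)

lemma kneser_vertex_finite: "u \<in> kneser_vertices n r \<Longrightarrow> finite u"
  by (auto simp: kneser_vertices_def intro: finite_subset)

lemma kneser_common_neighbour_iff:
  assumes "u \<in> kneser_vertices n r" "v \<in> kneser_vertices n r"
  shows "(\<exists>w\<in>kneser_vertices n r. kneser_adj u w \<and> kneser_adj w v) \<longleftrightarrow> r + card (u \<union> v) \<le> n"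
proof -
  have uv: "u \<union> v \<subseteq> {1..n}"
    using assms by (auto simp: kneser_vertices_def)
  have "w \<in> kneser_vertices n r \<and> kneser_adj u w \<and> kneser_adj w v \<longleftrightarrow>
      w \<subseteq> {1..n} - (u \<union> v) \<and> card w = r" for w
    unfolding kneser_vertices_def kneser_adj_def by blast
  then have "(\<exists>w\<in>kneser_vertices n r. kneser_adj u w \<and> kneser_adj w v) \<longleftrightarrow>
      (\<exists>w\<subseteq>{1..n} - (u \<union> v). card w = r)"
    by blast
  also have "\<dots> \<longleftrightarrow> r \<le> card ({1..n} - (u \<union> v))"
    by (meson card_mono finite_Diff finite_atLeastAtMost obtain_subset_with_card_n)
  also have "card ({1..n} - (u \<union> v)) = n - card (u \<union> v)"
    using uv by (subst card_Diff_subset) (auto intro: finite_subset)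
  finally show ?thesis
    using card_mono[OF _ uv] by auto
qed

lemma kneser_dist_ge_3_iff:
  assumes "u \<in> kneser_vertices n r" "v \<in> kneser_vertices n r" "u \<noteq> v"
  shows "dist_ge (kneser_vertices n r) kneser_adj 3 u v \<longleftrightarrow>
    0 < card (u \<inter> v) \<and> card (u \<inter> v) + n < 3 * r"
proof -
  have fin: "finite u" "finite v"
    using assms(1,2) by (simp_all add: kneser_vertex_finite)
  have card: "card u = r" "card v = r"
    using assms(1,2) by (simp_all add: kneser_vertices_def)
  have "dist_ge (kneser_vertices n r) kneser_adj 3 u v \<longleftrightarrow>
      \<not> kneser_adj u v \<and> \<not> r + card (u \<union> v) \<le> n"
    unfolding dist_ge_3_iff[OF assms(1,2)] kneser_common_neighbour_iff[OF assms(1,2)]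
    using assms(3) by simp
  also have "\<not> kneser_adj u v \<longleftrightarrow> 0 < card (u \<inter> v)"
    using fin by (simp add: kneser_adj_def card_gt_0_iff)
  also have "card (u \<union> v) = 2 * r - card (u \<inter> v)"
    using card_Un_Int[OF fin] card by simp
  finally show ?thesis
    using card_mono[OF fin(1), of "u \<inter> v"] card by auto
qed

lemma kneser_is_2packing_iff:
  "is_2packing (kneser_vertices n r) kneser_adj P \<longleftrightarrow> P \<subseteq> kneser_vertices n r \<and>
    (\<forall>u\<in>P. \<forall>v\<in>P. u \<noteq> v \<longrightarrow> 0 < card (u \<inter> v) \<and> card (u \<inter> v) + n < 3 * r)"
  unfolding is_2packing_def
proof (rule conj_cong[OF refl])
  assume "P \<subseteq> kneser_vertices n r"
  then show "(\<forall>u\<in>P. \<forall>v\<in>P. u \<noteq> v \<longrightarrow> dist_ge (kneser_vertices n r) kneser_adj 3 u v) \<longleftrightarrow>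
      (\<forall>u\<in>P. \<forall>v\<in>P. u \<noteq> v \<longrightarrow> 0 < card (u \<inter> v) \<and> card (u \<inter> v) + n < 3 * r)"
    by (simp add: kneser_dist_ge_3_iff subset_iff)
qed

lemma kneser_2packing_card_bound:
  assumes "is_2packing (kneser_vertices n r) kneser_adj P"
  shows "r * card P \<le> n + (3 * r - n - 1) * (card P choose 2)"
proof -
  have PV: "P \<subseteq> kneser_vertices n r"
    and meet: "\<And>u v. u \<in> P \<Longrightarrow> v \<in> P \<Longrightarrow> u \<noteq> v \<Longrightarrow> card (u \<inter> v) + n < 3 * r"
    using assms by (auto simp: kneser_is_2packing_iff)
  have "r * card P = (\<Sum>A\<in>P. card A)"
    using PV by (simp add: kneser_vertices_def subset_iff)
  also have "\<dots> \<le> card (\<Union>P) + (3 * r - n - 1) * (card P choose 2)"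
  proof (rule sum_card_le_card_Union_plus_pairs)
    show "finite P"
      using PV finite_kneser_vertices by (rule finite_subset)
    show "finite A" if "A \<in> P" for A
      using PV that by (blast intro: kneser_vertex_finite)
    show "card (A \<inter> B) \<le> 3 * r - n - 1" if "A \<in> P" "B \<in> P" "A \<noteq> B" for A B
      using meet[OF that] by linarith
  qed
  also have "card (\<Union>P) \<le> n"
    using PV card_mono[of "{1..n}" "\<Union>P"] by (auto simp: kneser_vertices_def)
  finally show ?thesis
    by linarith
qed

lemma kneser_2packing_card_le_4:
  assumes "is_2packing (kneser_vertices n r) kneser_adj P"
    and "25 * r \<le> 9 * n + 9" "n + 1 < 3 * r"
  shows "card P \<le> 4"
proof (rule ccontr)
  assume "\<not> card P \<le> 4"
  then obtain Q where "Q \<subseteq> P" "card Q = 5"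
    using obtain_subset_with_card_n[of 5 P] by auto
  moreover have "(5::nat) choose 2 = 10"
    by (simp add: choose_two)
  ultimately have "r * 5 \<le> n + (3 * r - n - 1) * 10"
    using kneser_2packing_card_bound[OF is_2packing_subset[OF assms(1)], of Q] by simp
  with assms(2,3) show False
    by linarith
qed

lemma kneser_four_vertices_meeting_in:
  assumes "0 < r" "3 * a \<le> r" "4 * r \<le> n + 6 * a"
  obtains P where "P \<subseteq> kneser_vertices n r" "card P = 4"
    "\<And>u v. u \<in> P \<Longrightarrow> v \<in> P \<Longrightarrow> u \<noteq> v \<Longrightarrow> card (u \<inter> v) = a"
proof -
  obtain m where r: "r = 3 * a + m"
    using assms(2) le_Suc_ex by blast
  txt \<open>The six blocks \<open>{k a<..(k+1) a}\<close>, \<open>k < 6\<close>, are shared by the pairs 12, 13, 14, 23, 24, 34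
    in this order; above \<open>6 a\<close> each set gets a private block of size \<open>m\<close>.\<close>
  define A1 :: "nat set" where "A1 = {0<..3*a} \<union> {6*a<..6*a+m}"
  define A2 :: "nat set" where "A2 = {0<..a} \<union> {3*a<..5*a} \<union> {6*a+m<..6*a+2*m}"
  define A3 :: "nat set" where "A3 = {a<..2*a} \<union> {3*a<..4*a} \<union> {5*a<..6*a} \<union> {6*a+2*m<..6*a+3*m}"
  define A4 :: "nat set" where "A4 = {2*a<..3*a} \<union> {4*a<..6*a} \<union> {6*a+3*m<..6*a+4*m}"
  have card: "card A1 = r" "card A2 = r" "card A3 = r" "card A4 = r"
    unfolding A1_def A2_def A3_def A4_def r
    by (simp_all add: card_Un_greaterThanAtMost subset_iff)
  have "A1 \<inter> A2 = {0<..a}" "A1 \<inter> A3 = {a<..2*a}" "A1 \<inter> A4 = {2*a<..3*a}"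
    "A2 \<inter> A3 = {3*a<..4*a}" "A2 \<inter> A4 = {4*a<..5*a}" "A3 \<inter> A4 = {5*a<..6*a}"
    unfolding A1_def A2_def A3_def A4_def by auto
  then have meet: "card (A1 \<inter> A2) = a" "card (A1 \<inter> A3) = a" "card (A1 \<inter> A4) = a"
    "card (A2 \<inter> A3) = a" "card (A2 \<inter> A4) = a" "card (A3 \<inter> A4) = a"
    by simp_all
  have neq: "X \<noteq> Y" if "card (X \<inter> Y) = a" "card X = r" for X Y
    using that assms(1,2) by auto
  show thesis
  proof
    show "{A1, A2, A3, A4} \<subseteq> kneser_vertices n r"
      using card assms(3) unfolding kneser_vertices_def A1_def A2_def A3_def A4_def r by auto
    show "card {A1, A2, A3, A4} = 4"
      using neq[OF meet(1) card(1)] neq[OF meet(2) card(1)] neq[OF meet(3) card(1)]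
        neq[OF meet(4) card(2)] neq[OF meet(5) card(2)] neq[OF meet(6) card(3)]
      by simp
    show "card (u \<inter> v) = a" if "u \<in> {A1, A2, A3, A4}" "v \<in> {A1, A2, A3, A4}" "u \<noteq> v" for u v
      using that meet by (auto simp: Int_commute)
  qed
qed

theorem corollary4p10:
  fixes n r :: nat
  assumes "0 < n" "0 < r"
    and "25 / 9 * real r - 1 \<le> real n" "real n < 14 / 5 * real r - 1"
  shows "rho2 (kneser_vertices n r) kneser_adj = 4"
proof -
  have "real (25 * r) \<le> real (9 * n + 9)" "real (5 * n + 5) < real (14 * r)"
    using assms(3,4) by simp_all
  then have upper: "25 * r \<le> 9 * n + 9" and lower: "5 * n + 5 < 14 * r"
    by (simp_all only: of_nat_le_iff of_nat_less_iff)
  define a where "a = 3 * r - n - 1"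
  have a: "0 < a" "a + n < 3 * r" "3 * a \<le> r" "4 * r \<le> n + 6 * a"
    unfolding a_def using upper lower by arith+
  obtain P where P: "P \<subseteq> kneser_vertices n r" "card P = 4"
    "\<And>u v. u \<in> P \<Longrightarrow> v \<in> P \<Longrightarrow> u \<noteq> v \<Longrightarrow> card (u \<inter> v) = a"
    using kneser_four_vertices_meeting_in[OF assms(2) a(3,4)] by blast
  have "is_2packing (kneser_vertices n r) kneser_adj P"
    using P(1,3) a(1,2) by (simp add: kneser_is_2packing_iff)
  moreover have "card Q \<le> card P" if "is_2packing (kneser_vertices n r) kneser_adj Q" for Q
    using kneser_2packing_card_le_4[OF that upper] a(1,2) P(2) by simp
  ultimately show ?thesis
    using rho2_eqI[OF finite_kneser_vertices] P(2) by metis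
qed

end
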